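(* There is an absolute constant $C>0$ such that the following holds. Let $U^*,S,p_{ijk},\widehat p_{ijk},\mathcal{W}_{ijk},\delta_{ijk}$ be as in the context, and let $U\in\mathbb{R}^{n\times r}$ be fixed (independent of $\delta$) with unit-norm columns and $|U_{il}|\le2\|(U^* )^i\|$ for all $i,l$. Let $\gamma\in(0,1]$, $i\in[n]$, $q\in[r]$ and $b\in\mathbb{R}^n$ be fixed. If $m\ge\frac{C}{\gamma^2}n\log(n)S^2$, then with probability at least $1-n^{-10}$, $$\Big|\sum_{j,k}\delta_{ijk}\mathcal{W}_{ijk}U^*_{iq}U_{jq}U^*_{jq}U_{kq}b_k-U^*_{iq}\langle U_q,U^*_q\rangle\langle U_q,b\rangle\Big|\le\gamma\|b\|.$$
   Context: $U^*\in\mathbb{R}^{n\times r}$ has orthonormal columns $U^*_l$ and rows $(U^* )^i$; $S=\sum_i\|(U^* )^i\|^{3/2}$; $p_{ijk}=\frac{\|(U^* )^i\|^{3/2}\|(U^* )^j\|^{3/2}+\|(U^* )^j\|^{3/2}\|(U^* )^k\|^{3/2}+\|(U^* )^k\|^{3/2}\|(U^* )^i\|^{3/2}}{3nS^2}$; $\widehat p_{ijk}=\min\{mp_{ijk},1\}$; $\mathcal{W}_{ijk}=1/\widehat p_{ijk}$ if $\widehat p_{ijk}>0$, else $0$; $\delta_{ijk}$ are independent Bernoulli$(\widehat p_{ijk})$ random variables. *)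

theory Defs
  imports "HOL-Probability.Probability"
begin

text \<open>Matrices are n x r arrays given as functions nat => nat => real,
  entry (i,l) with i < n, l < r (indices 0-based).\<close>

definition orthonormal_cols :: "nat \<Rightarrow> nat \<Rightarrow> (nat \<Rightarrow> nat \<Rightarrow> real) \<Rightarrow> bool" where
  "orthonormal_cols n r A \<longleftrightarrow>
     (\<forall>l<r. \<forall>l'<r. (\<Sum>i<n. A i l * A i l') = (if l = l' then 1 else 0))"

definition unit_cols :: "nat \<Rightarrow> nat \<Rightarrow> (nat \<Rightarrow> nat \<Rightarrow> real) \<Rightarrow> bool" where
  "unit_cols n r A \<longleftrightarrow> (\<forall>l<r. (\<Sum>i<n. (A i l)\<^sup>2) = 1)"

definition row_norm :: "nat \<Rightarrow> (nat \<Rightarrow> nat \<Rightarrow> real) \<Rightarrow> nat \<Rightarrow> real" where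
  "row_norm r A i = sqrt (\<Sum>l<r. (A i l)\<^sup>2)"

definition vec_norm :: "nat \<Rightarrow> (nat \<Rightarrow> real) \<Rightarrow> real" where
  "vec_norm n b = sqrt (\<Sum>k<n. (b k)\<^sup>2)"

definition S_const :: "nat \<Rightarrow> nat \<Rightarrow> (nat \<Rightarrow> nat \<Rightarrow> real) \<Rightarrow> real" where
  "S_const n r A = (\<Sum>i<n. row_norm r A i powr (3/2))"

definition p_prob :: "nat \<Rightarrow> nat \<Rightarrow> (nat \<Rightarrow> nat \<Rightarrow> real) \<Rightarrow> nat \<Rightarrow> nat \<Rightarrow> nat \<Rightarrow> real" where
  "p_prob n r A i j k =
     (row_norm r A i powr (3/2) * row_norm r A j powr (3/2)
      + row_norm r A j powr (3/2) * row_norm r A k powr (3/2)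
      + row_norm r A k powr (3/2) * row_norm r A i powr (3/2))
     / (3 * real n * (S_const n r A)\<^sup>2)"

definition phat :: "real \<Rightarrow> nat \<Rightarrow> nat \<Rightarrow> (nat \<Rightarrow> nat \<Rightarrow> real) \<Rightarrow> nat \<Rightarrow> nat \<Rightarrow> nat \<Rightarrow> real" where
  "phat m n r A i j k = min (m * p_prob n r A i j k) 1"

definition W_weight :: "real \<Rightarrow> nat \<Rightarrow> nat \<Rightarrow> (nat \<Rightarrow> nat \<Rightarrow> real) \<Rightarrow> nat \<Rightarrow> nat \<Rightarrow> nat \<Rightarrow> real" where
  "W_weight m n r A i j k =
     (if phat m n r A i j k > 0 then 1 / phat m n r A i j k else 0)"

definition delta_pmf :: "real \<Rightarrow> nat \<Rightarrow> nat \<Rightarrow> (nat \<Rightarrow> nat \<Rightarrow> real) \<Rightarrow> (nat \<times> nat \<times> nat \<Rightarrow> bool) pmf" where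
  "delta_pmf m n r A =
     Pi_pmf ({..<n} \<times> {..<n} \<times> {..<n}) False
       (\<lambda>(i,j,k). bernoulli_pmf (phat m n r A i j k))"

end

theory Submission
  imports Defs
begin

(*
  The estimator keeps the summand indexed by (i,j,k) with probability phat_ijk and reweights it
  by 1/phat_ijk, so it is unbiased for the bilinear form.  By the elementary inequality
  x y z <= (x y)^(3/2) + (y z)^(3/2) + (z x)^(3/2) for row norms, and |U_kq| <= 2 ||U*_k||,
  every summand is at most 6 n S^2 |U_jq| |b_k| p_ijk; hence each reweighted summand that is
  genuinely random (phat_ijk < 1) is bounded by 6 n S^2 |U_jq| |b_k| / m.  Hoeffding's inequality
  for the n^2 independent summands bounds the deviation probability by
  2 exp (-(gamma m)^2 / (72 n^2 S^4)), which is at most n^-10 once m >= 100 n log n S^2 / gamma^2.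
*)

lemma row_norm_nonneg: "0 \<le> row_norm r A i"
  unfolding row_norm_def by (simp add: sum_nonneg)

lemma abs_le_row_norm:
  assumes "q < r" shows "\<bar>A i q\<bar> \<le> row_norm r A i"
proof -
  have "(A i q)\<^sup>2 \<le> (\<Sum>l<r. (A i l)\<^sup>2)"
    using assms by (intro member_le_sum) auto
  thus ?thesis unfolding row_norm_def using real_sqrt_le_mono by fastforce
qed

lemma S_const_pos:
  assumes "orthonormal_cols n r A" "q < r"
  shows "0 < S_const n r A"
proof -
  have unit: "(\<Sum>i<n. A i q * A i q) = 1" using assms unfolding orthonormal_cols_def by auto
  have "\<exists>i<n. A i q \<noteq> 0"
  proof (rule ccontr)
    assume "\<not> (\<exists>i<n. A i q \<noteq> 0)"
    hence "(\<Sum>i<n. A i q * A i q) = 0" by simp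
    with unit show False by simp
  qed
  then obtain i where i: "i < n" "A i q \<noteq> 0" by blast
  have "0 < \<bar>A i q\<bar>" using i by simp
  also have "\<dots> \<le> row_norm r A i" using assms(2) by (rule abs_le_row_norm)
  finally show ?thesis unfolding S_const_def
    using i row_norm_nonneg by (intro sum_pos2[of _ i]) auto
qed

lemma vec_norm_sq: "(vec_norm n b)\<^sup>2 = (\<Sum>k<n. (b k)\<^sup>2)"
  unfolding vec_norm_def by (simp add: sum_nonneg)

lemma vec_norm_eq_0D: "vec_norm n b = 0 \<Longrightarrow> k < n \<Longrightarrow> b k = 0"
  using vec_norm_sq[of n b] sum_nonneg_eq_0_iff[of "{..<n}" "\<lambda>k. (b k)\<^sup>2"] by simp

lemma powr_three_halves: "0 \<le> t \<Longrightarrow> t powr (3/2) = t * sqrt (t::real)"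
  by (cases "t = 0") (simp_all add: powr_add[of t 1 "1/2", simplified] powr_half_sqrt)

lemma mult_le_powr_three_halves_if_min:
  fixes x y z :: real
  assumes "0 \<le> x" "0 \<le> y" "0 \<le> z" "z \<le> x" "z \<le> y"
  shows "x * y * z \<le> x powr (3/2) * y powr (3/2)"
proof -
  have "z = sqrt (z * z)" using assms(3) by simp
  also have "\<dots> \<le> sqrt (x * y)" using assms by (intro real_sqrt_le_mono mult_mono) auto
  finally have "x * y * z \<le> x * y * (sqrt x * sqrt y)"
    using assms by (intro mult_left_mono) (auto simp: real_sqrt_mult)
  thus ?thesis using assms by (simp add: powr_three_halves ac_simps)
qed

lemma mult_le_pairwise_powr_three_halves:
  fixes x y z :: real
  assumes "0 \<le> x" "0 \<le> y" "0 \<le> z"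
  shows "x * y * z \<le> x powr (3/2) * y powr (3/2) + y powr (3/2) * z powr (3/2)
                        + z powr (3/2) * x powr (3/2)"
proof -
  have nonneg: "0 \<le> x powr (3/2) * y powr (3/2)" "0 \<le> y powr (3/2) * z powr (3/2)"
    "0 \<le> z powr (3/2) * x powr (3/2)" by simp_all
  consider "z \<le> x" "z \<le> y" | "x \<le> y" "x \<le> z" | "y \<le> x" "y \<le> z" by linarith
  thus ?thesis
  proof cases
    case 1
    with mult_le_powr_three_halves_if_min[of x y z] assms nonneg show ?thesis by linarith
  next
    case 2
    have "y * z * x \<le> y powr (3/2) * z powr (3/2)"
      using 2 assms by (intro mult_le_powr_three_halves_if_min) auto
    moreover have "x * y * z = y * z * x" by simp
    ultimately show ?thesis using nonneg by linarith
  next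
    case 3
    have "z * x * y \<le> z powr (3/2) * x powr (3/2)"
      using 3 assms by (intro mult_le_powr_three_halves_if_min) auto
    moreover have "x * y * z = z * x * y" by simp
    ultimately show ?thesis using nonneg by linarith
  qed
qed

lemma ln_2_ge_half: "1/2 \<le> ln (2::real)"
  using ln_add1_ge[of 1] by simp

lemma two_exp_le_powr_neg_ten:
  fixes n :: nat and t :: real
  assumes n: "2 \<le> n" and t: "100 * ln (real n) \<le> t"
  shows "2 * exp (- t\<^sup>2 / 72) \<le> real n powr (-10)"
proof -
  define L where "L = ln (real n)"
  have L2: "ln 2 \<le> L" unfolding L_def using n by simp
  with ln_2_ge_half have L: "1/2 \<le> L" by linarith
  have "(100 * L)\<^sup>2 \<le> t\<^sup>2" using t L unfolding L_def by (intro power_mono) auto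
  moreover have "L \<le> 2 * (L * L)" using mult_left_mono[OF L, of L] L by simp
  moreover have "(100 * L)\<^sup>2 / 72 = 10000 / 72 * (L * L)" by (simp add: power2_eq_square)
  ultimately have "10 * L + ln 2 \<le> t\<^sup>2 / 72" using L L2 by linarith
  hence "2 * exp (- t\<^sup>2 / 72) \<le> 2 * exp (- (10 * L + ln 2))" by simp
  also have "\<dots> = exp (- 10 * L)" by (simp add: exp_diff exp_minus)
  also have "\<dots> = real n powr (-10)" unfolding L_def using n by (simp add: powr_def)
  finally show ?thesis .
qed

lemma prob_Pi_pmf_bernoulli_weighted_sum_close:
  fixes I T :: "'a set" and p c a R :: "'a \<Rightarrow> real" and \<epsilon> :: real
  assumes fin: "finite I" and TI: "T \<subseteq> I"
    and p: "\<And>t. t \<in> T \<Longrightarrow> 0 \<le> p t \<and> p t \<le> 1"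
    and mean: "\<And>t. t \<in> T \<Longrightarrow> c t * p t = a t"
    and bound: "\<And>t. t \<in> T \<Longrightarrow> p t < 1 \<Longrightarrow> \<bar>c t\<bar> \<le> R t"
    and R: "\<And>t. t \<in> T \<Longrightarrow> 0 \<le> R t"
    and \<epsilon>: "0 \<le> \<epsilon>"
  shows "measure_pmf.prob (Pi_pmf I False (\<lambda>t. bernoulli_pmf (p t)))
           {\<delta>. \<bar>(\<Sum>t\<in>T. of_bool (\<delta> t) * c t) - (\<Sum>t\<in>T. a t)\<bar> \<le> \<epsilon>}
         \<ge> 1 - 2 * exp (- \<epsilon>\<^sup>2 / (2 * (\<Sum>t\<in>T. (R t)\<^sup>2)))"
proof -
  define D where "D = Pi_pmf I False (\<lambda>t. bernoulli_pmf (p t))"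
  define X where "X t \<delta> = of_bool (\<delta> t) * c t" for t and \<delta> :: "'a \<Rightarrow> bool"
  define centre where "centre t = (if p t = 1 then c t else 0)" for t
  have law: "map_pmf (\<lambda>\<delta>. \<delta> t) D = bernoulli_pmf (p t)" if "t \<in> T" for t
    unfolding D_def using fin TI that by (subst Pi_pmf_component) auto
  have expectation: "measure_pmf.expectation D (X t) = a t" if "t \<in> T" for t
  proof -
    have "measure_pmf.expectation D (X t)
        = measure_pmf.expectation (map_pmf (\<lambda>\<delta>. \<delta> t) D) (\<lambda>v. of_bool v * c t)"
      unfolding X_def by simp
    also have "\<dots> = a t" using law[OF that] p[OF that] mean[OF that] by (simp add: mult.commute)
    finally show ?thesis .
  qed
  have range: "AE \<delta> in measure_pmf D. X t \<delta> \<in> {centre t - R t..centre t + R t}" if "t \<in> T" for t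
  proof (subst AE_measure_pmf_iff, intro ballI)
    fix \<delta> assume "\<delta> \<in> set_pmf D"
    hence "\<delta> t \<in> set_pmf (bernoulli_pmf (p t))" using law[OF that] by (metis pmf.set_map imageI)
    thus "X t \<delta> \<in> {centre t - R t..centre t + R t}"
      using bound[OF that] R[OF that] p[OF that] unfolding X_def centre_def
      by (cases "\<delta> t") (auto simp: set_pmf_iff)
  qed
  have indep: "prob_space.indep_vars (measure_pmf D) (\<lambda>_. borel) X T"
  proof -
    have "prob_space.indep_vars (measure_pmf D) (\<lambda>_. count_space UNIV) (\<lambda>t \<delta>. \<delta> t) T"
      using prob_space.indep_vars_subset[OF measure_pmf.prob_space_axioms
          indep_vars_Pi_pmf[OF fin] TI] unfolding D_def .
    from prob_space.indep_vars_compose2[OF measure_pmf.prob_space_axioms this, of "\<lambda>t v. of_bool v * c t"]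
    show ?thesis unfolding X_def by simp
  qed
  interpret Hoeffding_ineq "measure_pmf D" T X "\<lambda>t. centre t - R t" "\<lambda>t. centre t + R t"
    "\<Sum>t\<in>T. measure_pmf.expectation D (X t)"
    using fin TI finite_subset indep range by unfold_locales auto
  have width: "(\<Sum>t\<in>T. (centre t + R t - (centre t - R t))\<^sup>2) = 4 * (\<Sum>t\<in>T. (R t)\<^sup>2)"
    by (simp add: sum_distrib_left power2_eq_square)
  have tail: "measure_pmf.prob D {\<delta>. \<epsilon> \<le> \<bar>(\<Sum>t\<in>T. X t \<delta>) - (\<Sum>t\<in>T. a t)\<bar>}
      \<le> 2 * exp (- \<epsilon>\<^sup>2 / (2 * (\<Sum>t\<in>T. (R t)\<^sup>2)))"
  proof (cases "(\<Sum>t\<in>T. (R t)\<^sup>2) = 0")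
    case True
    \<comment> \<open>The bound degenerates to 2 because division by zero yields zero.\<close>
    thus ?thesis using measure_pmf.prob_le_1 by (simp add: order_trans[of _ 1])
  next
    case False
    hence "(\<Sum>t\<in>T. (R t)\<^sup>2) > 0" by (simp add: order_neq_le_trans sum_nonneg)
    from Hoeffding_ineq_abs_ge[OF \<epsilon>] this show ?thesis
      unfolding width using expectation by (simp add: mult.commute)
  qed
  have "1 - measure_pmf.prob D {\<delta>. \<epsilon> \<le> \<bar>(\<Sum>t\<in>T. X t \<delta>) - (\<Sum>t\<in>T. a t)\<bar>}
      = measure_pmf.prob D (UNIV - {\<delta>. \<epsilon> \<le> \<bar>(\<Sum>t\<in>T. X t \<delta>) - (\<Sum>t\<in>T. a t)\<bar>})"
    using measure_pmf.prob_compl[of "{\<delta>. \<epsilon> \<le> \<bar>(\<Sum>t\<in>T. X t \<delta>) - (\<Sum>t\<in>T. a t)\<bar>}" D] by simp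
  also have "\<dots> \<le> measure_pmf.prob D {\<delta>. \<bar>(\<Sum>t\<in>T. X t \<delta>) - (\<Sum>t\<in>T. a t)\<bar> \<le> \<epsilon>}"
    by (intro measure_pmf.finite_measure_mono) auto
  finally have "measure_pmf.prob D {\<delta>. \<bar>(\<Sum>t\<in>T. X t \<delta>) - (\<Sum>t\<in>T. a t)\<bar> \<le> \<epsilon>}
      \<ge> 1 - measure_pmf.prob D {\<delta>. \<epsilon> \<le> \<bar>(\<Sum>t\<in>T. X t \<delta>) - (\<Sum>t\<in>T. a t)\<bar>}" .
  with tail show ?thesis unfolding D_def X_def by linarith
qed

lemma p_prob_nonneg: "0 \<le> p_prob n r A i j k"
  unfolding p_prob_def by simp

lemma abs_summand_le_p_prob:
  assumes bnd: "\<forall>i'<n. \<forall>l<r. \<bar>U i' l\<bar> \<le> 2 * row_norm r Ustar i'"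
    and q: "q < r" and k: "k < n" and S: "0 < S_const n r Ustar"
  shows "\<bar>Ustar i q * U j q * Ustar j q * U k q * b k\<bar>
    \<le> 6 * real n * (S_const n r Ustar)\<^sup>2 * \<bar>U j q\<bar> * \<bar>b k\<bar> * p_prob n r Ustar i j k"
proof -
  define x y z where "x = row_norm r Ustar i" and "y = row_norm r Ustar j" and "z = row_norm r Ustar k"
  define num where "num = x powr (3/2) * y powr (3/2) + y powr (3/2) * z powr (3/2)
                        + z powr (3/2) * x powr (3/2)"
  have xyz: "0 \<le> x" "0 \<le> y" "0 \<le> z" unfolding x_def y_def z_def by (simp_all add: row_norm_nonneg)
  have p: "p_prob n r Ustar i j k = num / (3 * real n * (S_const n r Ustar)\<^sup>2)"
    unfolding p_prob_def num_def x_def y_def z_def ..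
  have "\<bar>Ustar i q * U j q * Ustar j q * U k q * b k\<bar>
      = \<bar>Ustar i q\<bar> * \<bar>Ustar j q\<bar> * \<bar>U k q\<bar> * (\<bar>U j q\<bar> * \<bar>b k\<bar>)"
    by (simp add: abs_mult ac_simps)
  also have "\<dots> \<le> x * y * (2 * z) * (\<bar>U j q\<bar> * \<bar>b k\<bar>)"
  proof -
    have "\<bar>Ustar i q\<bar> \<le> x" "\<bar>Ustar j q\<bar> \<le> y"
      unfolding x_def y_def using q by (simp_all add: abs_le_row_norm)
    moreover have "\<bar>U k q\<bar> \<le> 2 * z" unfolding z_def using bnd k q by simp
    ultimately show ?thesis using xyz by (intro mult_mono) auto
  qed
  also have "\<dots> \<le> 2 * num * (\<bar>U j q\<bar> * \<bar>b k\<bar>)"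
  proof -
    have "x * y * z \<le> num" unfolding num_def by (rule mult_le_pairwise_powr_three_halves[OF xyz])
    hence "x * y * (2 * z) \<le> 2 * num" by (simp add: algebra_simps)
    thus ?thesis by (rule mult_right_mono) simp
  qed
  also have "\<dots> = 6 * real n * (S_const n r Ustar)\<^sup>2 * \<bar>U j q\<bar> * \<bar>b k\<bar> * p_prob n r Ustar i j k"
    unfolding p using k S by (simp add: field_simps)
  finally show ?thesis .
qed

lemma
  assumes m: "0 < m" and K: "0 \<le> K" and x: "\<bar>x\<bar> \<le> K * p_prob n r A i j k"
  shows W_weight_mult_phat: "W_weight m n r A i j k * x * phat m n r A i j k = x"
    and abs_W_weight_mult_le: "phat m n r A i j k < 1 \<Longrightarrow> \<bar>W_weight m n r A i j k * x\<bar> \<le> K / m"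
proof -
  have p: "0 \<le> p_prob n r A i j k" by (rule p_prob_nonneg)
  show "W_weight m n r A i j k * x * phat m n r A i j k = x"
  proof (cases "p_prob n r A i j k = 0")
    case True
    thus ?thesis using x by simp
  next
    case False
    hence "0 < m * p_prob n r A i j k" using m p by simp
    hence "0 < phat m n r A i j k" unfolding phat_def by simp
    thus ?thesis unfolding W_weight_def by simp
  qed
  show "\<bar>W_weight m n r A i j k * x\<bar> \<le> K / m" if "phat m n r A i j k < 1"
  proof (cases "p_prob n r A i j k = 0")
    case True
    thus ?thesis using m K by (simp add: W_weight_def phat_def)
  next
    case False
    hence phat: "phat m n r A i j k = m * p_prob n r A i j k" "0 < m * p_prob n r A i j k"
      using that m p unfolding phat_def by auto
    have "\<bar>W_weight m n r A i j k * x\<bar> = \<bar>x\<bar> / (m * p_prob n r A i j k)"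
      unfolding W_weight_def using phat by simp
    also have "\<dots> \<le> K * p_prob n r A i j k / (m * p_prob n r A i j k)"
      using x phat by (intro divide_right_mono) auto
    also have "\<dots> = K / m" using False by simp
    finally show ?thesis .
  qed
qed

lemma sum_singleton_times_times:
  "finite A \<Longrightarrow> finite B \<Longrightarrow> (\<Sum>t\<in>{i} \<times> A \<times> B. f t) = (\<Sum>j\<in>A. \<Sum>k\<in>B. f (i, j, k))"
  using sum.cartesian_product[of "\<lambda>x y. f (x, y)" "A \<times> B" "{i}"]
    sum.cartesian_product[of "\<lambda>j k. f (i, j, k)" B A] by simp

lemma prob_sampled_sum_close:
  fixes n r i q :: nat and Ustar U :: "nat \<Rightarrow> nat \<Rightarrow> real" and b :: "nat \<Rightarrow> real" and m \<epsilon> :: real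
  assumes unit: "unit_cols n r U"
    and bnd: "\<forall>i'<n. \<forall>l<r. \<bar>U i' l\<bar> \<le> 2 * row_norm r Ustar i'"
    and i: "i < n" and q: "q < r" and m: "0 < m" and S: "0 < S_const n r Ustar" and \<epsilon>: "0 \<le> \<epsilon>"
  shows "measure_pmf.prob (delta_pmf m n r Ustar)
       {\<delta>. \<bar>(\<Sum>j<n. \<Sum>k<n. of_bool (\<delta> (i,j,k)) * W_weight m n r Ustar i j k
                 * Ustar i q * U j q * Ustar j q * U k q * b k)
             - Ustar i q * (\<Sum>j<n. U j q * Ustar j q) * (\<Sum>k<n. U k q * b k)\<bar> \<le> \<epsilon>}
     \<ge> 1 - 2 * exp (- \<epsilon>\<^sup>2 / (72 * (real n * (S_const n r Ustar)\<^sup>2 * vec_norm n b / m)\<^sup>2))"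
proof -
  define T where "T = {i} \<times> {..<n} \<times> {..<n}"
  define a where "a = (\<lambda>(_::nat, j, k). Ustar i q * U j q * Ustar j q * U k q * b k)"
  define c where "c = (\<lambda>(_::nat, j, k). W_weight m n r Ustar i j k * a (i, j, k))"
  define p where "p = (\<lambda>(i', j, k). phat m n r Ustar i' j k)"
  define R where "R = (\<lambda>(_::nat, j, k). 6 * real n * (S_const n r Ustar)\<^sup>2 * \<bar>U j q\<bar> * \<bar>b k\<bar> / m)"
  have a_le: "\<bar>a (i, j, k)\<bar> \<le> 6 * real n * (S_const n r Ustar)\<^sup>2 * \<bar>U j q\<bar> * \<bar>b k\<bar> * p_prob n r Ustar i j k"
    if "k < n" for j k
    unfolding a_def using abs_summand_le_p_prob[OF bnd q that S] by simp
  have delta: "delta_pmf m n r Ustar = Pi_pmf ({..<n} \<times> {..<n} \<times> {..<n}) False (\<lambda>t. bernoulli_pmf (p t))"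
    unfolding delta_pmf_def p_def by (intro arg_cong[where f = "Pi_pmf _ False"]) auto
  have sum_T: "(\<Sum>t\<in>T. f t) = (\<Sum>j<n. \<Sum>k<n. f (i, j, k))" for f :: "_ \<Rightarrow> real"
    unfolding T_def by (simp add: sum_singleton_times_times)
  have prob: "measure_pmf.prob (Pi_pmf ({..<n} \<times> {..<n} \<times> {..<n}) False (\<lambda>t. bernoulli_pmf (p t)))
           {\<delta>. \<bar>(\<Sum>t\<in>T. of_bool (\<delta> t) * c t) - (\<Sum>t\<in>T. a t)\<bar> \<le> \<epsilon>}
         \<ge> 1 - 2 * exp (- \<epsilon>\<^sup>2 / (2 * (\<Sum>t\<in>T. (R t)\<^sup>2)))"
  proof (rule prob_Pi_pmf_bernoulli_weighted_sum_close)
    show "T \<subseteq> {..<n} \<times> {..<n} \<times> {..<n}" unfolding T_def using i by auto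
    fix t assume "t \<in> T"
    then obtain j k where t: "t = (i, j, k)" and k: "k < n" unfolding T_def by auto
    show "0 \<le> p t \<and> p t \<le> 1" unfolding p_def phat_def t using m by (simp add: p_prob_nonneg)
    show "c t * p t = a t" unfolding c_def p_def t
      using W_weight_mult_phat[OF m _ a_le[OF k]] S by simp
    show "\<bar>c t\<bar> \<le> R t" if "p t < 1" unfolding c_def R_def t
      using abs_W_weight_mult_le[OF m _ a_le[OF k]] that S by (simp add: p_def t)
    show "0 \<le> R t" unfolding R_def t using m by simp
  qed (simp_all add: \<epsilon>)
  have sample: "(\<Sum>t\<in>T. of_bool (\<delta> t) * c t)
      = (\<Sum>j<n. \<Sum>k<n. of_bool (\<delta> (i,j,k)) * W_weight m n r Ustar i j k
                 * Ustar i q * U j q * Ustar j q * U k q * b k)" for \<delta>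
    unfolding sum_T c_def a_def by (simp add: mult.assoc del: sum_of_bool_mult_eq)
  have mean: "(\<Sum>t\<in>T. a t) = Ustar i q * (\<Sum>j<n. U j q * Ustar j q) * (\<Sum>k<n. U k q * b k)"
  proof -
    have "(\<Sum>t\<in>T. a t) = Ustar i q * (\<Sum>j<n. \<Sum>k<n. (U j q * Ustar j q) * (U k q * b k))"
      unfolding sum_T a_def sum_distrib_left by (intro sum.cong refl) (simp add: mult.assoc)
    thus ?thesis by (simp add: sum_product)
  qed
  have width: "2 * (\<Sum>t\<in>T. (R t)\<^sup>2) = 72 * (real n * (S_const n r Ustar)\<^sup>2 * vec_norm n b / m)\<^sup>2"
  proof -
    have "(\<Sum>t\<in>T. (R t)\<^sup>2)
        = (6 * real n * (S_const n r Ustar)\<^sup>2 / m)\<^sup>2 * (\<Sum>j<n. \<Sum>k<n. (U j q)\<^sup>2 * (b k)\<^sup>2)"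
      unfolding sum_T R_def sum_distrib_left by (simp add: power_mult_distrib power_divide mult.assoc)
    also have "(\<Sum>j<n. \<Sum>k<n. (U j q)\<^sup>2 * (b k)\<^sup>2) = (\<Sum>j<n. (U j q)\<^sup>2) * (\<Sum>k<n. (b k)\<^sup>2)"
      by (rule sum_product[symmetric])
    also have "\<dots> = (vec_norm n b)\<^sup>2" using unit q unfolding unit_cols_def vec_norm_sq by simp
    finally show ?thesis by (simp add: power_mult_distrib power_divide)
  qed
  show ?thesis using prob unfolding delta sample mean width .
qed

lemma sampled_sum_close_with_high_prob:
  fixes n r i q :: nat and Ustar U :: "nat \<Rightarrow> nat \<Rightarrow> real" and b :: "nat \<Rightarrow> real" and m \<gamma> :: real
  assumes orth: "orthonormal_cols n r Ustar" and unit: "unit_cols n r U"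
    and bnd: "\<forall>i'<n. \<forall>l<r. \<bar>U i' l\<bar> \<le> 2 * row_norm r Ustar i'"
    and \<gamma>: "0 < \<gamma>" "\<gamma> \<le> 1" and i: "i < n" and q: "q < r"
    and m: "m \<ge> 100 / \<gamma>\<^sup>2 * real n * ln (real n) * (S_const n r Ustar)\<^sup>2"
  shows "measure_pmf.prob (delta_pmf m n r Ustar)
       {\<delta>. \<bar>(\<Sum>j<n. \<Sum>k<n. of_bool (\<delta> (i,j,k)) * W_weight m n r Ustar i j k
                 * Ustar i q * U j q * Ustar j q * U k q * b k)
             - Ustar i q * (\<Sum>j<n. U j q * Ustar j q) * (\<Sum>k<n. U k q * b k)\<bar>
           \<le> \<gamma> * vec_norm n b}
     \<ge> 1 - real n powr (-10)"
proof -
  define S where "S = S_const n r Ustar"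
  have S: "0 < S" unfolding S_def using orth q by (rule S_const_pos)
  have "0 \<le> vec_norm n b" unfolding vec_norm_def by (simp add: sum_nonneg)
  then consider "n < 2" | "vec_norm n b = 0" | "2 \<le> n" "0 < vec_norm n b" by linarith
  then show ?thesis
  proof cases
    case 1
    with i have "n = 1" by simp
    thus ?thesis by simp
  next
    case 2
    thus ?thesis using vec_norm_eq_0D[OF 2] by simp
  next
    case 3
    define t where "t = \<gamma> * m / (real n * S\<^sup>2)"
    have "0 \<le> ln (real n)" using 3 by simp
    hence "100 * ln (real n) \<le> 100 * ln (real n) / \<gamma>"
      using \<gamma> by (simp add: le_divide_eq mult_left_le)
    also have "\<dots> \<le> t" unfolding t_def using m 3 \<gamma> S
      by (simp add: S_def field_simps power2_eq_square)
    finally have t: "100 * ln (real n) \<le> t" .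
    have "0 < 100 / \<gamma>\<^sup>2 * real n * ln (real n) * S\<^sup>2" using 3 \<gamma> S by simp
    hence "0 < m" using m unfolding S_def by linarith
    have "(\<gamma> * vec_norm n b)\<^sup>2 / (72 * (real n * S\<^sup>2 * vec_norm n b / m)\<^sup>2) = t\<^sup>2 / 72"
      unfolding t_def using 3 S \<open>0 < m\<close> by (simp add: field_simps power2_eq_square)
    with prob_sampled_sum_close[OF unit bnd i q \<open>0 < m\<close>, of "\<gamma> * vec_norm n b" b]
      two_exp_le_powr_neg_ten[OF 3(1) t] 3 S \<gamma>
    show ?thesis unfolding S_def by simp
  qed
qed

theorem mainTheorem6:
  shows "\<exists>C>0. \<forall>(n::nat) (r::nat) (Ustar::nat \<Rightarrow> nat \<Rightarrow> real) (U::nat \<Rightarrow> nat \<Rightarrow> real)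
            (\<gamma>::real) (i::nat) (q::nat) (b::nat \<Rightarrow> real) (m::real).
     orthonormal_cols n r Ustar \<longrightarrow>
     unit_cols n r U \<longrightarrow>
     (\<forall>i'<n. \<forall>l<r. \<bar>U i' l\<bar> \<le> 2 * row_norm r Ustar i') \<longrightarrow>
     0 < \<gamma> \<longrightarrow> \<gamma> \<le> 1 \<longrightarrow> i < n \<longrightarrow> q < r \<longrightarrow>
     m \<ge> C / \<gamma>\<^sup>2 * real n * ln (real n) * (S_const n r Ustar)\<^sup>2 \<longrightarrow>
     measure_pmf.prob (delta_pmf m n r Ustar)
       {\<delta>. \<bar>(\<Sum>j<n. \<Sum>k<n. of_bool (\<delta> (i,j,k)) * W_weight m n r Ustar i j k
                 * Ustar i q * U j q * Ustar j q * U k q * b k)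
             - Ustar i q * (\<Sum>j<n. U j q * Ustar j q) * (\<Sum>k<n. U k q * b k)\<bar>
           \<le> \<gamma> * vec_norm n b}
     \<ge> 1 - real n powr (-10)"
  by (intro exI[of _ 100] conjI allI impI sampled_sum_close_with_high_prob) auto

end
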